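(* Let $n\ge3$ and $H=\sum_{1\le i\ne j\le n}[X_{ij}(R),X_{ji}(R)]\subseteq\mathfrak{stl}_n(R)$. Every $x\in H$ can be written as $$x=\sum_i t(a_i,b_i)+\sum_{2\le j\le n}T_{1j}(c_j,1)$$ for finitely many $a_i,b_i\in R$ and some $c_j\in R$.
   Context: $K$ is a unital commutative ring, $R$ a unital associative $K$-algebra, free as a $K$-module with a basis containing $1$. Leibniz algebra: $K$-bilinear bracket with $[x,[y,z]]=[[x,y],z]-[[x,z],y]$. For $n\ge3$, $\mathfrak{stl}_n(R)$ is the Leibniz algebra over $K$ generated by $X_{ij}(a)$, $a\in R$, $1\le i\ne j\le n$, subject to: $X_{ij}$ is $K$-linear in $a$; $[X_{ij}(a),X_{jk}(b)]=X_{ik}(ab)$ and $[X_{ij}(a),X_{ki}(b)]=-X_{kj}(ba)$ for distinct $i,j,k$; $[X_{ij}(a),X_{kl}(b)]=0$ for $j\ne k$, $i\ne l$. Notation: $T_{ij}(a,b)=[X_{ij}(a),X_{ji}(b)]$, and $t(a,b)=T_{1j}(a,b)-T_{1j}(ba,1)$ for any $2\le j\le n$ (this is independent of $j$). *)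

theory Defs
  imports Main
begin

definition is_K_module :: "('k::comm_ring_1 \<Rightarrow> 'm::ab_group_add \<Rightarrow> 'm) \<Rightarrow> bool" where
  "is_K_module s \<longleftrightarrow>
     (\<forall>a x y. s a (x + y) = s a x + s a y) \<and>
     (\<forall>a b x. s (a + b) x = s a x + s b x) \<and>
     (\<forall>a b x. s (a * b) x = s a (s b x)) \<and>
     (\<forall>x. s 1 x = x)"

definition is_K_algebra :: "('k::comm_ring_1 \<Rightarrow> 'r::ring_1 \<Rightarrow> 'r) \<Rightarrow> bool" where
  "is_K_algebra s \<longleftrightarrow> is_K_module s \<and>
     (\<forall>k x y. s k (x * y) = s k x * y \<and> s k (x * y) = x * s k y)"

definition is_K_basis :: "('k::comm_ring_1 \<Rightarrow> 'm::ab_group_add \<Rightarrow> 'm) \<Rightarrow> 'm set \<Rightarrow> bool" where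
  "is_K_basis s B \<longleftrightarrow>
     (\<forall>x. \<exists>!c::'m \<Rightarrow> 'k. finite {b. c b \<noteq> 0} \<and> {b. c b \<noteq> 0} \<subseteq> B \<and>
            x = (\<Sum>b\<in>{b. c b \<noteq> 0}. s (c b) b))"

definition is_leibniz :: "('k::comm_ring_1 \<Rightarrow> 'l::ab_group_add \<Rightarrow> 'l) \<Rightarrow> ('l \<Rightarrow> 'l \<Rightarrow> 'l) \<Rightarrow> bool" where
  "is_leibniz s br \<longleftrightarrow> is_K_module s \<and>
     (\<forall>x y z. br (x + y) z = br x z + br y z) \<and>
     (\<forall>x y z. br x (y + z) = br x y + br x z) \<and>
     (\<forall>k x y. br (s k x) y = s k (br x y) \<and> br x (s k y) = s k (br x y)) \<and>
     (\<forall>x y z. br x (br y z) = br (br x y) z - br (br x z) y)"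

definition stl_rels :: "nat \<Rightarrow> ('k::comm_ring_1 \<Rightarrow> 'r::ring_1 \<Rightarrow> 'r) \<Rightarrow>
    ('k \<Rightarrow> 'l::ab_group_add \<Rightarrow> 'l) \<Rightarrow> ('l \<Rightarrow> 'l \<Rightarrow> 'l) \<Rightarrow> (nat \<Rightarrow> nat \<Rightarrow> 'r \<Rightarrow> 'l) \<Rightarrow> bool" where
  "stl_rels n sR sL br X \<longleftrightarrow>
     (\<forall>i\<in>{1..n}. \<forall>j\<in>{1..n}. i \<noteq> j \<longrightarrow>
        (\<forall>a b. X i j (a + b) = X i j a + X i j b) \<and>
        (\<forall>k a. X i j (sR k a) = sL k (X i j a))) \<and>
     (\<forall>i\<in>{1..n}. \<forall>j\<in>{1..n}. \<forall>k\<in>{1..n}. i \<noteq> j \<and> j \<noteq> k \<and> i \<noteq> k \<longrightarrow>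
        (\<forall>a b. br (X i j a) (X j k b) = X i k (a * b)) \<and>
        (\<forall>a b. br (X i j a) (X k i b) = - X k j (b * a))) \<and>
     (\<forall>i\<in>{1..n}. \<forall>j\<in>{1..n}. \<forall>k\<in>{1..n}. \<forall>l\<in>{1..n}.
        i \<noteq> j \<and> k \<noteq> l \<and> j \<noteq> k \<and> i \<noteq> l \<longrightarrow>
        (\<forall>a b. br (X i j a) (X k l b) = 0))"

definition stT :: "('l \<Rightarrow> 'l \<Rightarrow> 'l) \<Rightarrow> (nat \<Rightarrow> nat \<Rightarrow> 'r \<Rightarrow> 'l) \<Rightarrow> nat \<Rightarrow> nat \<Rightarrow> 'r \<Rightarrow> 'r \<Rightarrow> 'l" where
  "stT br X i j a b = br (X i j a) (X j i b)"

definition stt :: "('l::ab_group_add \<Rightarrow> 'l \<Rightarrow> 'l) \<Rightarrow> (nat \<Rightarrow> nat \<Rightarrow> 'r::ring_1 \<Rightarrow> 'l) \<Rightarrow> 'r \<Rightarrow> 'r \<Rightarrow> 'l" where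
  "stt br X a b = stT br X 1 2 a b - stT br X 1 2 (b * a) 1"

inductive_set stlH :: "nat \<Rightarrow> ('k::comm_ring_1 \<Rightarrow> 'l::ab_group_add \<Rightarrow> 'l) \<Rightarrow> ('l \<Rightarrow> 'l \<Rightarrow> 'l)
    \<Rightarrow> (nat \<Rightarrow> nat \<Rightarrow> 'r \<Rightarrow> 'l) \<Rightarrow> 'l set"
  for n sL br X where
  zero: "0 \<in> stlH n sL br X"
| gen: "\<lbrakk>i \<in> {1..n}; j \<in> {1..n}; i \<noteq> j\<rbrakk> \<Longrightarrow> stT br X i j a b \<in> stlH n sL br X"
| add: "\<lbrakk>x \<in> stlH n sL br X; y \<in> stlH n sL br X\<rbrakk> \<Longrightarrow> x + y \<in> stlH n sL br X"
| smul: "x \<in> stlH n sL br X \<Longrightarrow> sL k x \<in> stlH n sL br X"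

end

theory Submission
  imports Defs "HOL.Modules"
begin

(* The Leibniz identity applied to X_ji(b) = [X_jk(b), X_ki(1)] and to X_ij(a) = [X_ik(a), X_kj(1)]
   gives, for distinct i, j, k,
     T_ij(a,b) = T_ik(ab,1) + T_kj(a,b)   and   T_ij(a,b) = T_ik(a,b) - T_jk(ba,1).
   With 1 as one of the indices these yield
     T_1j(a,b) = t(a,b) + T_1j(ba,1),  T_j1(a,b) = t(a,b) - T_1j(ab,1),  T_kj(a,b) = T_1j(a,b) - T_1k(ab,1),
   so every generator of H is a sum of the required shape. Since T_ij is K-linear in its first argument
   and R is a K-algebra, so is t, hence these sums form a K-submodule, which therefore contains H. *)

lemma module_iff_is_K_module: "module s \<longleftrightarrow> is_K_module s"
  unfolding module_def is_K_module_def by auto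

locale leibniz_algebra =
  fixes sL :: "'k::comm_ring_1 \<Rightarrow> 'l::ab_group_add \<Rightarrow> 'l"
    and br :: "'l \<Rightarrow> 'l \<Rightarrow> 'l"
  assumes leibniz_algebra: "is_leibniz sL br"
begin

sublocale L: module sL
  using leibniz_algebra by (simp add: is_leibniz_def module_iff_is_K_module)

lemma bracket_left_hom: "module_hom sL sL (\<lambda>x. br x y)"
  using leibniz_algebra L.module_axioms by (simp add: is_leibniz_def module_hom_iff)

lemmas bracket_minus_left = module_hom.neg[OF bracket_left_hom]

lemma leibniz: "br x (br y z) = br (br x y) z - br (br x z) y"
  using leibniz_algebra by (simp add: is_leibniz_def)

end

locale stl_presentation = leibniz_algebra sL br
  for sL :: "'k::comm_ring_1 \<Rightarrow> 'l::ab_group_add \<Rightarrow> 'l" and br +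
  fixes sR :: "'k \<Rightarrow> 'r::ring_1 \<Rightarrow> 'r"
    and X :: "nat \<Rightarrow> nat \<Rightarrow> 'r \<Rightarrow> 'l"
    and n :: nat
  assumes K_algebra: "is_K_algebra sR"
    and relations: "stl_rels n sR sL br X"
begin

lemma module_sR: "module sR"
  using K_algebra by (simp add: is_K_algebra_def module_iff_is_K_module)

lemma sR_mult_right: "sR k (x * y) = x * sR k y"
  using K_algebra unfolding is_K_algebra_def by blast

lemma X_hom: "\<lbrakk>i \<in> {1..n}; j \<in> {1..n}; i \<noteq> j\<rbrakk> \<Longrightarrow> module_hom sR sL (X i j)"
  using relations module_sR L.module_axioms by (simp add: stl_rels_def module_hom_iff)

lemma bracket_X_chain:
  "\<lbrakk>i \<in> {1..n}; j \<in> {1..n}; k \<in> {1..n}; i \<noteq> j; j \<noteq> k; i \<noteq> k\<rbrakk>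
    \<Longrightarrow> br (X i j a) (X j k b) = X i k (a * b)"
  using relations unfolding stl_rels_def by blast

lemma bracket_X_chain_rev:
  "\<lbrakk>i \<in> {1..n}; j \<in> {1..n}; k \<in> {1..n}; i \<noteq> j; j \<noteq> k; i \<noteq> k\<rbrakk>
    \<Longrightarrow> br (X i j a) (X k i b) = - X k j (b * a)"
  using relations unfolding stl_rels_def by blast

lemma stT_left_hom:
  assumes "i \<in> {1..n}" "j \<in> {1..n}" "i \<noteq> j"
  shows "module_hom sR sL (\<lambda>a. stT br X i j a b)"
  using module_hom_compose[OF X_hom[OF assms] bracket_left_hom]
  by (simp add: stT_def o_def)

lemma stT_split_right:
  assumes "i \<in> {1..n}" "j \<in> {1..n}" "k \<in> {1..n}" "i \<noteq> j" "j \<noteq> k" "i \<noteq> k"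
  shows "stT br X i j a b = stT br X i k (a * b) 1 + stT br X k j a b"
proof -
  have "stT br X i j a b = br (X i j a) (br (X j k b) (X k i 1))"
    using assms by (simp add: stT_def bracket_X_chain)
  also have "\<dots> = br (br (X i j a) (X j k b)) (X k i 1) - br (br (X i j a) (X k i 1)) (X j k b)"
    by (rule leibniz)
  finally show ?thesis
    using assms by (simp add: stT_def bracket_X_chain bracket_X_chain_rev bracket_minus_left)
qed

lemma stT_split_left:
  assumes "i \<in> {1..n}" "j \<in> {1..n}" "k \<in> {1..n}" "i \<noteq> j" "j \<noteq> k" "i \<noteq> k"
  shows "stT br X i j a b = stT br X i k a b - stT br X j k (b * a) 1"
proof -
  have "stT br X i k a b = br (X i k a) (br (X k j 1) (X j i b))"
    using assms by (simp add: stT_def bracket_X_chain)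
  also have "\<dots> = br (br (X i k a) (X k j 1)) (X j i b) - br (br (X i k a) (X j i b)) (X k j 1)"
    by (rule leibniz)
  finally show ?thesis
    using assms by (simp add: stT_def bracket_X_chain bracket_X_chain_rev bracket_minus_left)
qed

lemma stT_1j_eq:
  assumes "j \<in> {2..n}"
  shows "stT br X 1 j a b = stt br X a b + stT br X 1 j (b * a) 1"
proof (cases "j = 2")
  case True
  then show ?thesis by (simp add: stt_def)
next
  case False
  then have "stT br X 1 j c d = stT br X 1 2 c d - stT br X j 2 (d * c) 1" for c d
    using assms by (intro stT_split_left) auto
  from this[of a b] this[of "b * a" 1] show ?thesis
    by (simp add: stt_def)
qed

lemma stT_kj_eq:
  assumes "j \<in> {2..n}" "k \<in> {2..n}" "j \<noteq> k"
  shows "stT br X k j a b = stT br X 1 j a b - stT br X 1 k (a * b) 1"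
  using stT_split_right[of 1 j k a b] assms by (simp add: algebra_simps)

lemma stT_j1_eq:
  assumes "3 \<le> n" "j \<in> {2..n}"
  shows "stT br X j 1 a b = stt br X a b - stT br X 1 j (a * b) 1"
proof -
  define m :: nat where "m = (if j = 2 then 3 else 2)"
  have m: "m \<in> {2..n}" "m \<noteq> j"
    using assms by (auto simp: m_def)
  have "stT br X j 1 a b = stT br X j m a b - stT br X 1 m (b * a) 1"
    using stT_split_left[of j 1 m] assms m by auto
  also have "stT br X j m a b = stT br X 1 m a b - stT br X 1 j (a * b) 1"
    using stT_kj_eq[of m j] assms m by auto
  finally show ?thesis
    using stT_1j_eq[OF m(1), of a b] by (simp add: algebra_simps)
qed

lemma stt_scale:
  assumes "2 \<le> n"
  shows "sL k (stt br X a b) = stt br X (sR k a) b"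
proof -
  have "sL k (stT br X 1 2 c d) = stT br X 1 2 (sR k c) d" for c d
    using module_hom.scale[OF stT_left_hom] assms by simp
  then show ?thesis
    by (simp add: stt_def L.scale_right_diff_distrib sR_mult_right)
qed

lemma stt_sum_list_scale:
  assumes "2 \<le> n"
  shows "sL k (\<Sum>(a, b)\<leftarrow>ps. stt br X a b) = (\<Sum>(a, b)\<leftarrow>map (\<lambda>(a, b). (sR k a, b)) ps. stt br X a b)"
  by (induction ps) (auto simp: L.scale_right_distrib stt_scale[OF assms])

lemma stT_1j_sum_zero: "(\<Sum>j = 2..n. stT br X 1 j 0 1) = 0"
  by (intro sum.neutral ballI module_hom.zero[OF stT_left_hom]) auto

lemma stT_1j_sum_add:
  "(\<Sum>j = 2..n. stT br X 1 j (c j) 1) + (\<Sum>j = 2..n. stT br X 1 j (d j) 1)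
    = (\<Sum>j = 2..n. stT br X 1 j (c j + d j) 1)"
  unfolding sum.distrib[symmetric]
  by (intro sum.cong refl module_hom.add[OF stT_left_hom, symmetric]) auto

lemma stT_1j_sum_scale:
  "sL k (\<Sum>j = 2..n. stT br X 1 j (c j) 1) = (\<Sum>j = 2..n. stT br X 1 j (sR k (c j)) 1)"
  unfolding L.scale_sum_right
  by (intro sum.cong refl module_hom.scale[OF stT_left_hom, symmetric]) auto

definition normal_forms :: "'l set" where
  "normal_forms = {(\<Sum>(a, b)\<leftarrow>ps. stt br X a b) + (\<Sum>j = 2..n. stT br X 1 j (c j) 1) | ps c. True}"

lemma normal_formsI:
  "x = (\<Sum>(a, b)\<leftarrow>ps. stt br X a b) + (\<Sum>j = 2..n. stT br X 1 j (c j) 1) \<Longrightarrow> x \<in> normal_forms"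
  unfolding normal_forms_def by blast

lemma normal_formsE:
  assumes "x \<in> normal_forms"
  obtains ps c where "x = (\<Sum>(a, b)\<leftarrow>ps. stt br X a b) + (\<Sum>j = 2..n. stT br X 1 j (c j) 1)"
  using assms unfolding normal_forms_def by blast

lemma subspace_normal_forms:
  assumes "2 \<le> n"
  shows "L.subspace normal_forms"
  unfolding L.subspace_def
proof (intro conjI ballI allI)
  show "0 \<in> normal_forms"
    unfolding normal_forms_def using stT_1j_sum_zero
    by (intro CollectI exI[of _ "[]"] exI[of _ "\<lambda>_. 0"]) simp
next
  fix x y assume "x \<in> normal_forms" "y \<in> normal_forms"
  then obtain ps c qs d
    where "x = (\<Sum>(a, b)\<leftarrow>ps. stt br X a b) + (\<Sum>j = 2..n. stT br X 1 j (c j) 1)"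
      and "y = (\<Sum>(a, b)\<leftarrow>qs. stt br X a b) + (\<Sum>j = 2..n. stT br X 1 j (d j) 1)"
    by (elim normal_formsE)
  then have "x + y = (\<Sum>(a, b)\<leftarrow>ps @ qs. stt br X a b)
      + ((\<Sum>j = 2..n. stT br X 1 j (c j) 1) + (\<Sum>j = 2..n. stT br X 1 j (d j) 1))"
    by (simp add: algebra_simps)
  then show "x + y \<in> normal_forms"
    unfolding stT_1j_sum_add by (rule normal_formsI)
next
  fix k x assume "x \<in> normal_forms"
  then obtain ps c
    where "x = (\<Sum>(a, b)\<leftarrow>ps. stt br X a b) + (\<Sum>j = 2..n. stT br X 1 j (c j) 1)"
    by (elim normal_formsE)
  then have "sL k x = sL k (\<Sum>(a, b)\<leftarrow>ps. stt br X a b) + sL k (\<Sum>j = 2..n. stT br X 1 j (c j) 1)"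
    by (simp only: L.scale_right_distrib)
  then show "sL k x \<in> normal_forms"
    unfolding stt_sum_list_scale[OF assms] stT_1j_sum_scale by (rule normal_formsI)
qed

lemma stt_in_normal_forms: "stt br X a b \<in> normal_forms"
  unfolding normal_forms_def using stT_1j_sum_zero
  by (intro CollectI exI[of _ "[(a, b)]"] exI[of _ "\<lambda>_. 0"]) simp

lemma stT_1j_unit_in_normal_forms:
  assumes "j \<in> {2..n}"
  shows "stT br X 1 j c 1 \<in> normal_forms"
proof -
  have "(\<Sum>l = 2..n. stT br X 1 l (if l = j then c else 0) 1)
      = (\<Sum>l = 2..n. if l = j then stT br X 1 j c 1 else 0)"
    by (intro sum.cong refl) (auto simp: module_hom.zero[OF stT_left_hom])
  also have "\<dots> = stT br X 1 j c 1"
    using assms by simp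
  finally show ?thesis
    unfolding normal_forms_def
    by (intro CollectI exI[of _ "[]"] exI[of _ "\<lambda>l. if l = j then c else 0"]) simp
qed

lemma stT_in_normal_forms:
  assumes "3 \<le> n" "i \<in> {1..n}" "j \<in> {1..n}" "i \<noteq> j"
  shows "stT br X i j a b \<in> normal_forms"
proof -
  have S: "L.subspace normal_forms"
    using assms(1) by (intro subspace_normal_forms) simp
  note t = stt_in_normal_forms and T = stT_1j_unit_in_normal_forms
  consider "i = 1" "j \<in> {2..n}" | "j = 1" "i \<in> {2..n}" | "i \<in> {2..n}" "j \<in> {2..n}"
    using assms by fastforce
  then show ?thesis
  proof cases
    case 1
    show ?thesis
      unfolding 1(1) stT_1j_eq[OF 1(2), of a b] by (rule L.subspace_add[OF S t T[OF 1(2)]])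
  next
    case 2
    show ?thesis
      unfolding 2(1) stT_j1_eq[OF assms(1) 2(2), of a b] by (rule L.subspace_diff[OF S t T[OF 2(2)]])
  next
    case 3
    show ?thesis
      unfolding stT_kj_eq[OF 3(2,1) assms(4)[symmetric], of a b] stT_1j_eq[OF 3(2), of a b]
      by (rule L.subspace_diff[OF S L.subspace_add[OF S t T[OF 3(2)]] T[OF 3(1)]])
  qed
qed

lemma stlH_subset_normal_forms:
  assumes "3 \<le> n"
  shows "stlH n sL br X \<subseteq> normal_forms"
proof
  have S: "L.subspace normal_forms"
    using assms by (intro subspace_normal_forms) simp
  fix x assume "x \<in> stlH n sL br X"
  then show "x \<in> normal_forms"
  proof (induction rule: stlH.induct)
    case zero
    show ?case by (rule L.subspace_0[OF S])
  next
    case (gen i j a b)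
    then show ?case by (intro stT_in_normal_forms assms)
  next
    case (add x y)
    from add.IH show ?case by (rule L.subspace_add[OF S])
  next
    case (smul x k)
    from smul.IH show ?case by (rule L.subspace_scale[OF S])
  qed
qed

end

theorem lemma2p7:
  fixes sR :: "'k::comm_ring_1 \<Rightarrow> 'r::ring_1 \<Rightarrow> 'r"
    and sL :: "'k \<Rightarrow> 'l::ab_group_add \<Rightarrow> 'l"
    and br :: "'l \<Rightarrow> 'l \<Rightarrow> 'l"
    and X :: "nat \<Rightarrow> nat \<Rightarrow> 'r \<Rightarrow> 'l"
    and n :: nat and x :: 'l
  assumes "n \<ge> 3"
    and "is_K_algebra sR"
    and "\<exists>B. 1 \<in> B \<and> is_K_basis sR B"
    and "is_leibniz sL br"
    and "stl_rels n sR sL br X"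
    and "x \<in> stlH n sL br X"
  shows "\<exists>ps :: ('r \<times> 'r) list. \<exists>c :: nat \<Rightarrow> 'r.
           x = (\<Sum>(a, b)\<leftarrow>ps. stt br X a b) + (\<Sum>j = 2..n. stT br X 1 j (c j) 1)"
proof -
  interpret stl_presentation sL br sR X n
    using assms(2,4,5) by unfold_locales
  have "x \<in> normal_forms"
    using stlH_subset_normal_forms[OF assms(1)] assms(6) by (rule subsetD)
  then obtain ps c where "x = (\<Sum>(a, b)\<leftarrow>ps. stt br X a b) + (\<Sum>j = 2..n. stT br X 1 j (c j) 1)"
    by (rule normal_formsE)
  then show ?thesis
    by (intro exI)
qed

end
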